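(* Let $G=(X,E)$ be a finite connected graph with $n=|X|$, $W:X\to\mathbb{R}$, and let $w_1\ge w_2\ge\dots\ge w_n$ be the values of $W$ listed with multiplicity in decreasing order. For each real $Q$ let $\lambda_1\le\dots\le\lambda_n$ be the eigenvalues of $H=\Delta-QW$ and $\psi_1,\dots,\psi_n$ a corresponding orthonormal basis of eigenvectors (any choice). Then for every $i$ and every vertex $v$ with $W(v)\neq w_i$, $\psi_i(v)\to0$ as $Q\to\infty$.
   Context: $\Delta$ is the symmetrized Laplacian: $\Delta(v,v)=1$, $\Delta(v,w)=-1/\sqrt{d_vd_w}$ if $vw\in E$ ($d_v$ the degree), $0$ otherwise; $W$ is identified with the diagonal matrix $\mathrm{diag}(W(v))$. *)

theory Defs
  imports "HOL-Analysis.Analysis"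
begin

definition simple_graph :: "'a set \<Rightarrow> ('a \<Rightarrow> 'a \<Rightarrow> bool) \<Rightarrow> bool" where
  "simple_graph X E \<longleftrightarrow> finite X \<and> (\<forall>u v. E u v \<longrightarrow> u \<in> X \<and> v \<in> X)
     \<and> (\<forall>u v. E u v \<longrightarrow> E v u) \<and> (\<forall>u. \<not> E u u)"

definition graph_connected :: "'a set \<Rightarrow> ('a \<Rightarrow> 'a \<Rightarrow> bool) \<Rightarrow> bool" where
  "graph_connected X E \<longleftrightarrow> X \<noteq> {} \<and> (\<forall>u\<in>X. \<forall>v\<in>X. E\<^sup>*\<^sup>* u v)"

definition degree :: "'a set \<Rightarrow> ('a \<Rightarrow> 'a \<Rightarrow> bool) \<Rightarrow> 'a \<Rightarrow> nat" where
  "degree X E v = card {u \<in> X. E v u}"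

definition sym_laplacian :: "'a set \<Rightarrow> ('a \<Rightarrow> 'a \<Rightarrow> bool) \<Rightarrow> 'a \<Rightarrow> 'a \<Rightarrow> real" where
  "sym_laplacian X E v w =
     (if v = w then 1
      else if E v w then - 1 / sqrt (real (degree X E v) * real (degree X E w))
      else 0)"

definition schrodinger_apply ::
  "'a set \<Rightarrow> ('a \<Rightarrow> 'a \<Rightarrow> bool) \<Rightarrow> ('a \<Rightarrow> real) \<Rightarrow> real \<Rightarrow> ('a \<Rightarrow> real) \<Rightarrow> 'a \<Rightarrow> real" where
  "schrodinger_apply X E W Q f v =
     (\<Sum>u\<in>X. sym_laplacian X E v u * f u) - Q * W v * f v"

text \<open>w 0 \<ge> w 1 \<ge> ... \<ge> w (n-1) are the values of W on X listed with multiplicity.\<close>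
definition decreasing_listing :: "'a set \<Rightarrow> ('a \<Rightarrow> real) \<Rightarrow> (nat \<Rightarrow> real) \<Rightarrow> bool" where
  "decreasing_listing X W w \<longleftrightarrow>
     (\<exists>\<sigma>. bij_betw \<sigma> {..<card X} X \<and> (\<forall>i<card X. w i = W (\<sigma> i)))
     \<and> (\<forall>i j. i \<le> j \<and> j < card X \<longrightarrow> w j \<le> w i)"

end

theory Submission
  imports Defs
begin

text \<open>By min-max, the \<open>i\<close>-th eigenvalue of \<open>\<Delta> - Q W\<close> is \<open>-Q w\<^sub>i + O(1)\<close>: testing
  the Rayleigh quotient on vectors supported on the \<open>i + 1\<close> vertices of largest potential
  (and orthogonal to the first \<open>i\<close> eigenvectors) bounds \<open>\<lambda>\<^sub>i\<close> from above, testing it on the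
  \<open>n - i\<close> vertices of smallest potential bounds it from below, and the Laplacian contributes at
  most \<open>\<Sum>\<bar>\<Delta>(a,b)\<bar>\<close> either way. The eigenvalue equation at \<open>v\<close> reads
  \<open>(\<lambda>\<^sub>i + Q W(v)) \<psi>\<^sub>i(v) = (\<Delta> \<psi>\<^sub>i)(v)\<close>, whose right-hand side is bounded since \<open>\<psi>\<^sub>i\<close> is a unit
  vector, while for \<open>W(v) \<noteq> w\<^sub>i\<close> the factor on the left grows like \<open>Q \<bar>W(v) - w\<^sub>i\<bar>\<close>.
  Hence \<open>\<psi>\<^sub>i(v) = O(1/Q)\<close>.\<close>

abbreviation inner_on :: "'a set \<Rightarrow> ('a \<Rightarrow> real) \<Rightarrow> ('a \<Rightarrow> real) \<Rightarrow> real" where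
  "inner_on X f g \<equiv> \<Sum>x\<in>X. f x * g x"

definition matrix_apply :: "'a set \<Rightarrow> ('a \<Rightarrow> 'a \<Rightarrow> real) \<Rightarrow> ('a \<Rightarrow> real) \<Rightarrow> 'a \<Rightarrow> real" where
  "matrix_apply X A f v = (\<Sum>u\<in>X. A v u * f u)"

definition entrywise_norm :: "'a set \<Rightarrow> ('a \<Rightarrow> 'a \<Rightarrow> real) \<Rightarrow> real" where
  "entrywise_norm X A = (\<Sum>a\<in>X. \<Sum>b\<in>X. \<bar>A a b\<bar>)"

lemma inner_on_sum_right:
  "inner_on X g (\<lambda>x. \<Sum>j\<in>J. c j * u j x) = (\<Sum>j\<in>J. c j * inner_on X g (u j))"
proof -
  have "inner_on X g (\<lambda>x. \<Sum>j\<in>J. c j * u j x) = (\<Sum>x\<in>X. \<Sum>j\<in>J. c j * (g x * u j x))"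
    by (simp only: sum_distrib_left mult.left_commute)
  also have "\<dots> = (\<Sum>j\<in>J. \<Sum>x\<in>X. c j * (g x * u j x))"
    by (rule sum.swap)
  finally show ?thesis
    by (simp add: sum_distrib_left)
qed

lemma inner_on_self_pos:
  assumes "finite X" "x \<in> X" "f x \<noteq> 0"
  shows "0 < inner_on X f f"
proof -
  have "0 < f x * f x"
    using assms(3) not_real_square_gt_zero by blast
  then show ?thesis
    using assms by (intro sum_pos2[of X x]) auto
qed

lemma inner_on_restrict:
  assumes "finite X" "S \<subseteq> X" "\<And>x. x \<notin> S \<Longrightarrow> f x = 0"
  shows "inner_on X g f = inner_on S g f"
  using assms by (intro sum.mono_neutral_right) auto

text \<open>One step of Gaussian elimination: the unknown at \<open>t0\<close> is solved from equation \<open>m\<close> and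
  substituted into the equations \<open>k < m\<close>.\<close>
lemma homogeneous_system_eliminate:
  fixes a :: "nat \<Rightarrow> 'b \<Rightarrow> real"
  assumes fin: "finite T" and t0: "t0 \<in> T" "a m t0 \<noteq> 0"
    and g: "\<forall>k<m. inner_on (T - {t0}) (\<lambda>t. a k t - a k t0 * a m t / a m t0) g = 0"
    and k: "k \<le> m"
  shows "inner_on T (a k) (g(t0 := - inner_on (T - {t0}) (a m) g / a m t0)) = 0"
proof -
  define f where "f = g(t0 := - inner_on (T - {t0}) (a m) g / a m t0)"
  have "inner_on T (a k) f = a k t0 * f t0 + inner_on (T - {t0}) (a k) f"
    using fin t0(1) by (simp add: sum.remove)
  also have "inner_on (T - {t0}) (a k) f = inner_on (T - {t0}) (a k) g"
    by (rule sum.cong) (auto simp: f_def)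
  also have "a k t0 * f t0 + inner_on (T - {t0}) (a k) g
      = inner_on (T - {t0}) (a k) g - a k t0 / a m t0 * inner_on (T - {t0}) (a m) g"
    by (simp add: f_def)
  finally have split: "inner_on T (a k) f
      = inner_on (T - {t0}) (a k) g - a k t0 / a m t0 * inner_on (T - {t0}) (a m) g" .
  show ?thesis
  proof (cases "k = m")
    case True
    then show ?thesis
      using split t0(2) by (simp add: f_def)
  next
    case False
    have "inner_on (T - {t0}) (a k) g - a k t0 / a m t0 * inner_on (T - {t0}) (a m) g
        = inner_on (T - {t0}) (\<lambda>t. a k t - a k t0 * a m t / a m t0) g"
      by (simp add: sum_subtractf sum_distrib_left algebra_simps)
    also have "\<dots> = 0"
      using g False k by simp
    finally show ?thesis
      using split by (simp add: f_def)
  qed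
qed

lemma homogeneous_system_nontrivial_solution:
  fixes T :: "'b set" and a :: "nat \<Rightarrow> 'b \<Rightarrow> real"
  assumes "finite T" "m < card T"
  shows "\<exists>f. (\<forall>x. x \<notin> T \<longrightarrow> f x = 0) \<and> (\<exists>x\<in>T. f x \<noteq> 0) \<and> (\<forall>k<m. inner_on T (a k) f = 0)"
  using assms
proof (induction m arbitrary: T a)
  case 0
  then obtain x where "x \<in> T"
    by fastforce
  then show ?case
    by (intro exI[of _ "\<lambda>y. if y = x then 1 else 0"]) auto
next
  case (Suc m)
  show ?case
  proof (cases "\<forall>t\<in>T. a m t = 0")
    case True
    have "m < card T"
      using Suc.prems by simp
    then obtain f where "\<forall>x. x \<notin> T \<longrightarrow> f x = 0" "\<exists>x\<in>T. f x \<noteq> 0"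
      "\<forall>k<m. inner_on T (a k) f = 0"
      using Suc.IH[OF Suc.prems(1)] by blast
    with True show ?thesis
      by (intro exI[of _ f]) (auto simp: less_Suc_eq)
  next
    case False
    then obtain t0 where t0: "t0 \<in> T" "a m t0 \<noteq> 0"
      by blast
    have "finite (T - {t0})" "m < card (T - {t0})"
      using Suc.prems t0 by auto
    then obtain g where g0: "\<forall>x. x \<notin> T - {t0} \<longrightarrow> g x = 0" and gnz: "\<exists>x\<in>T - {t0}. g x \<noteq> 0"
      and g: "\<forall>k<m. inner_on (T - {t0}) (\<lambda>t. a k t - a k t0 * a m t / a m t0) g = 0"
      using Suc.IH[of "T - {t0}" "\<lambda>k t. a k t - a k t0 * a m t / a m t0"] by blast
    define f where "f = g(t0 := - inner_on (T - {t0}) (a m) g / a m t0)"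
    show ?thesis
    proof (intro exI[of _ f] conjI allI impI)
      show "f x = 0" if "x \<notin> T" for x
        using that g0 t0 by (auto simp: f_def)
      show "\<exists>x\<in>T. f x \<noteq> 0"
        using gnz by (auto simp: f_def)
      show "inner_on T (a k) f = 0" if "k < Suc m" for k
        unfolding f_def using Suc.prems(1) t0 g that by (intro homogeneous_system_eliminate) auto
    qed
  qed
qed

lemma orthogonal_family_card_le:
  assumes fin: "finite X"
    and orth: "\<And>s t. s < m \<Longrightarrow> t < m \<Longrightarrow> s \<noteq> t \<Longrightarrow> inner_on X (U s) (U t) = 0"
    and nonzero: "\<And>s. s < m \<Longrightarrow> inner_on X (U s) (U s) \<noteq> 0"
  shows "m \<le> card X"
proof (rule ccontr)
  assume "\<not> m \<le> card X"
  obtain \<sigma> where \<sigma>: "bij_betw \<sigma> {..<card X} X"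
    using bij_betw_from_nat_into_finite[OF fin] by blast
  have "card X < card {..<m}"
    using \<open>\<not> m \<le> card X\<close> by simp
  then obtain c where nontrivial: "\<exists>s\<in>{..<m}. c s \<noteq> 0"
    and c: "\<forall>k<card X. inner_on {..<m} (\<lambda>t. U t (\<sigma> k)) c = 0"
    using homogeneous_system_nontrivial_solution[OF finite_lessThan,
        where m = "card X" and a = "\<lambda>k t. U t (\<sigma> k)"]
    by blast
  from nontrivial obtain s where s: "s < m" "c s \<noteq> 0"
    by blast
  have comb: "(\<Sum>t<m. c t * U t x) = 0" if "x \<in> X" for x
  proof -
    have "x \<in> \<sigma> ` {..<card X}"
      using \<sigma> that by (simp add: bij_betw_def)
    then obtain k where "k < card X" "x = \<sigma> k"
      by auto
    then show ?thesis
      using c by (simp add: mult.commute)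
  qed
  have "0 = inner_on X (U s) (\<lambda>x. \<Sum>t<m. c t * U t x)"
    using comb by simp
  also have "\<dots> = (\<Sum>t<m. c t * inner_on X (U s) (U t))"
    by (rule inner_on_sum_right)
  also have "\<dots> = (\<Sum>t<m. if t = s then c s * inner_on X (U s) (U s) else 0)"
    using orth s by (intro sum.cong) auto
  also have "\<dots> = c s * inner_on X (U s) (U s)"
    using s by simp
  finally show False
    using nonzero s by simp
qed

lemma orthonormal_family_complete:
  assumes fin: "finite X"
    and orth: "\<And>i j. i < card X \<Longrightarrow> j < card X \<Longrightarrow>
      inner_on X (u i) (u j) = (if i = j then 1 else 0)"
    and perp: "\<And>k. k < card X \<Longrightarrow> inner_on X (u k) g = 0"
    and v: "v \<in> X"
  shows "g v = 0"
proof (rule ccontr)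
  assume "g v \<noteq> 0"
  define U where "U t = (if t < card X then u t else g)" for t
  have "Suc (card X) \<le> card X"
  proof (rule orthogonal_family_card_le[OF fin])
    show "inner_on X (U s) (U t) = 0" if "s < Suc (card X)" "t < Suc (card X)" "s \<noteq> t" for s t
      using that orth[of s t] perp[of s] perp[of t] by (auto simp: U_def mult.commute less_Suc_eq)
    show "inner_on X (U s) (U s) \<noteq> 0" if "s < Suc (card X)" for s
      using that orth[of s s] inner_on_self_pos[of X v g] fin v \<open>g v \<noteq> 0\<close>
      by (auto simp: U_def less_Suc_eq)
  qed
  then show False
    by simp
qed

lemma orthonormal_expansion:
  assumes fin: "finite X"
    and orth: "\<And>i j. i < card X \<Longrightarrow> j < card X \<Longrightarrow>
      inner_on X (u i) (u j) = (if i = j then 1 else 0)"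
    and x: "x \<in> X"
  shows "f x = (\<Sum>j<card X. inner_on X (u j) f * u j x)"
proof -
  define g where "g y = f y - (\<Sum>j<card X. inner_on X (u j) f * u j y)" for y
  have perp: "inner_on X (u k) g = 0" if k: "k < card X" for k
  proof -
    have "inner_on X (u k) g = inner_on X (u k) f
        - inner_on X (u k) (\<lambda>y. \<Sum>j<card X. inner_on X (u j) f * u j y)"
      unfolding g_def by (simp add: right_diff_distrib sum_subtractf)
    also have "inner_on X (u k) (\<lambda>y. \<Sum>j<card X. inner_on X (u j) f * u j y)
        = (\<Sum>j<card X. inner_on X (u j) f * inner_on X (u k) (u j))"
      by (rule inner_on_sum_right)
    also have "\<dots> = (\<Sum>j<card X. if j = k then inner_on X (u k) f else 0)"
      using k by (intro sum.cong) (auto simp: orth)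
    also have "\<dots> = inner_on X (u k) f"
      using k by simp
    finally show ?thesis
      by simp
  qed
  have "g x = 0"
    by (rule orthonormal_family_complete[OF fin orth perp x])
  then show ?thesis
    by (simp add: g_def)
qed

lemma rayleigh_expansion:
  assumes fin: "finite X"
    and orth: "\<And>i j. i < card X \<Longrightarrow> j < card X \<Longrightarrow>
      inner_on X (u i) (u j) = (if i = j then 1 else 0)"
    and eig: "\<And>j x. j < card X \<Longrightarrow> x \<in> X \<Longrightarrow> matrix_apply X A (u j) x = l j * u j x"
  shows "inner_on X f (matrix_apply X A f) = (\<Sum>j<card X. l j * (inner_on X (u j) f)\<^sup>2)"
    and "inner_on X f f = (\<Sum>j<card X. (inner_on X (u j) f)\<^sup>2)"
proof -
  define c where "c j = inner_on X (u j) f" for j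
  have f_eq: "f x = (\<Sum>j<card X. c j * u j x)" if "x \<in> X" for x
    unfolding c_def by (rule orthonormal_expansion[OF fin orth that])
  have inner_f: "inner_on X f (u j) = c j" for j
    by (simp add: c_def mult.commute)
  have Af_eq: "matrix_apply X A f x = (\<Sum>j<card X. (c j * l j) * u j x)" if x: "x \<in> X" for x
  proof -
    have "matrix_apply X A f x = inner_on X (A x) (\<lambda>y. \<Sum>j<card X. c j * u j y)"
      unfolding matrix_apply_def using f_eq by simp
    also have "\<dots> = (\<Sum>j<card X. c j * inner_on X (A x) (u j))"
      by (rule inner_on_sum_right)
    also have "\<dots> = (\<Sum>j<card X. (c j * l j) * u j x)"
      using eig x by (simp add: matrix_apply_def mult.assoc)
    finally show ?thesis .
  qed
  have "inner_on X f (matrix_apply X A f) = inner_on X f (\<lambda>x. \<Sum>j<card X. (c j * l j) * u j x)"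
    using Af_eq by simp
  also have "\<dots> = (\<Sum>j<card X. (c j * l j) * inner_on X f (u j))"
    by (rule inner_on_sum_right)
  finally have "inner_on X f (matrix_apply X A f) = (\<Sum>j<card X. l j * (c j)\<^sup>2)"
    by (simp add: inner_f power2_eq_square mult_ac)
  then show "inner_on X f (matrix_apply X A f) = (\<Sum>j<card X. l j * (inner_on X (u j) f)\<^sup>2)"
    by (simp only: c_def)
  have "inner_on X f f = inner_on X f (\<lambda>x. \<Sum>j<card X. c j * u j x)"
    using f_eq by simp
  also have "\<dots> = (\<Sum>j<card X. c j * inner_on X f (u j))"
    by (rule inner_on_sum_right)
  finally have "inner_on X f f = (\<Sum>j<card X. (c j)\<^sup>2)"
    by (simp add: inner_f power2_eq_square)
  then show "inner_on X f f = (\<Sum>j<card X. (inner_on X (u j) f)\<^sup>2)"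
    by (simp only: c_def)
qed

lemma matrix_apply_uminus:
  "matrix_apply X (\<lambda>a b. - A a b) f x = - matrix_apply X A f x"
  by (simp add: matrix_apply_def sum_negf)

lemma eigenvalue_le_of_form_le:
  assumes fin: "finite X"
    and orth: "\<And>i j. i < card X \<Longrightarrow> j < card X \<Longrightarrow>
      inner_on X (u i) (u j) = (if i = j then 1 else 0)"
    and eig: "\<And>j x. j < card X \<Longrightarrow> x \<in> X \<Longrightarrow> matrix_apply X A (u j) x = l j * u j x"
    and sorted: "\<And>i j. i \<le> j \<Longrightarrow> j < card X \<Longrightarrow> l i \<le> l j"
    and S: "S \<subseteq> X" "card S = Suc i"
    and form: "\<And>f. (\<And>x. x \<notin> S \<Longrightarrow> f x = 0) \<Longrightarrow>
      inner_on X f (matrix_apply X A f) \<le> c * inner_on X f f"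
  shows "l i \<le> c"
proof -
  have "finite S" "i < card S"
    using fin S finite_subset by auto
  then obtain f where f0: "\<forall>x. x \<notin> S \<longrightarrow> f x = 0" and nz: "\<exists>x\<in>S. f x \<noteq> 0"
    and perp: "\<forall>k<i. inner_on S (u k) f = 0"
    using homogeneous_system_nontrivial_solution[of S i u] by blast
  have perp_X: "inner_on X (u j) f = 0" if "j < i" for j
    using perp that inner_on_restrict[OF fin S(1), of f "u j"] f0 by simp
  from nz obtain x0 where "x0 \<in> S" "f x0 \<noteq> 0"
    by blast
  then have pos: "0 < inner_on X f f"
    using S(1) inner_on_self_pos[of X x0 f] fin by blast
  have "l i * inner_on X f f = (\<Sum>j<card X. l i * (inner_on X (u j) f)\<^sup>2)"
    by (simp add: rayleigh_expansion(2)[OF fin orth eig] sum_distrib_left)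
  also have "\<dots> \<le> (\<Sum>j<card X. l j * (inner_on X (u j) f)\<^sup>2)"
  proof (rule sum_mono)
    fix j assume "j \<in> {..<card X}"
    then show "l i * (inner_on X (u j) f)\<^sup>2 \<le> l j * (inner_on X (u j) f)\<^sup>2"
      using perp_X[of j] sorted[of i j] by (cases "j < i") (auto intro: mult_right_mono)
  qed
  also have "\<dots> = inner_on X f (matrix_apply X A f)"
    by (rule rayleigh_expansion(1)[OF fin orth eig, symmetric])
  also have "\<dots> \<le> c * inner_on X f f"
    using f0 by (intro form) auto
  finally show ?thesis
    using pos by simp
qed

text \<open>The lower bound is the upper bound for \<open>-A\<close>, whose eigenvalues \<open>-l\<close> are sorted
  increasingly after reversing the indices.\<close>
lemma eigenvalue_ge_of_form_ge:
  assumes fin: "finite X"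
    and orth: "\<And>i j. i < card X \<Longrightarrow> j < card X \<Longrightarrow>
      inner_on X (u i) (u j) = (if i = j then 1 else 0)"
    and eig: "\<And>j x. j < card X \<Longrightarrow> x \<in> X \<Longrightarrow> matrix_apply X A (u j) x = l j * u j x"
    and sorted: "\<And>i j. i \<le> j \<Longrightarrow> j < card X \<Longrightarrow> l i \<le> l j"
    and i: "i < card X"
    and S: "S \<subseteq> X" "card S = card X - i"
    and form: "\<And>f. (\<And>x. x \<notin> S \<Longrightarrow> f x = 0) \<Longrightarrow>
      c * inner_on X f f \<le> inner_on X f (matrix_apply X A f)"
  shows "c \<le> l i"
proof -
  define r where "r j = card X - Suc j" for j
  have r_r: "r (r j) = j" if "j < card X" for j
    using that by (simp add: r_def)
  have "- l (r (r i)) \<le> - c"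
  proof (rule eigenvalue_le_of_form_le[OF fin, where u = "u \<circ> r" and A = "\<lambda>a b. - A a b"
        and l = "\<lambda>j. - l (r j)" and i = "r i" and c = "- c" and S = S])
    show "inner_on X ((u \<circ> r) j) ((u \<circ> r) k) = (if j = k then 1 else 0)"
      if "j < card X" "k < card X" for j k
      using that orth[of "r j" "r k"] r_r[of j] r_r[of k] by (auto simp: r_def)
    show "matrix_apply X (\<lambda>a b. - A a b) ((u \<circ> r) j) x = - l (r j) * (u \<circ> r) j x"
      if "j < card X" "x \<in> X" for j x
      using that eig[of "r j" x] by (simp add: matrix_apply_uminus r_def)
    show "- l (r j) \<le> - l (r k)" if "j \<le> k" "k < card X" for j k
      using that sorted[of "r k" "r j"] by (simp add: r_def)
    show "card S = Suc (r i)"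
      using S(2) i by (simp add: r_def)
    show "inner_on X f (matrix_apply X (\<lambda>a b. - A a b) f) \<le> - c * inner_on X f f"
      if "\<And>x. x \<notin> S \<Longrightarrow> f x = 0" for f
      using form[OF that] by (simp add: matrix_apply_uminus sum_negf)
  qed (use S(1) in simp)
  then show ?thesis
    using r_r[OF i] by simp
qed

definition schrodinger_matrix ::
  "'a set \<Rightarrow> ('a \<Rightarrow> 'a \<Rightarrow> bool) \<Rightarrow> ('a \<Rightarrow> real) \<Rightarrow> real \<Rightarrow> 'a \<Rightarrow> 'a \<Rightarrow> real" where
  "schrodinger_matrix X E W Q v u = sym_laplacian X E v u - (if v = u then Q * W v else 0)"

lemma schrodinger_apply_eq_matrix_apply:
  assumes "finite X" "v \<in> X"
  shows "schrodinger_apply X E W Q f v = matrix_apply X (schrodinger_matrix X E W Q) f v"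
proof -
  have "(\<Sum>u\<in>X. (if v = u then Q * W v else 0) * f u) = Q * W v * f v"
    using assms by (simp add: if_distrib[of "\<lambda>t. t * f _"] cong: if_cong)
  then show ?thesis
    by (simp add: schrodinger_apply_def matrix_apply_def schrodinger_matrix_def
        left_diff_distrib sum_subtractf)
qed

lemma schrodinger_form:
  "inner_on X f (schrodinger_apply X E W Q f)
    = inner_on X f (matrix_apply X (sym_laplacian X E) f) - Q * (\<Sum>x\<in>X. W x * (f x)\<^sup>2)"
  by (simp add: schrodinger_apply_def matrix_apply_def right_diff_distrib sum_subtractf
      sum_distrib_left power2_eq_square mult_ac)

lemma quadratic_form_abs_le:
  assumes fin: "finite X"
  shows "\<bar>inner_on X f (matrix_apply X M f)\<bar> \<le> entrywise_norm X M * inner_on X f f"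
proof -
  define N where "N = inner_on X f f"
  have square_le: "(f a)\<^sup>2 \<le> N" if "a \<in> X" for a
    unfolding N_def power2_eq_square using fin that by (intro member_le_sum) auto
  have product_le: "\<bar>f a * f b\<bar> \<le> N" if "a \<in> X" "b \<in> X" for a b
    using sum_squares_bound[of "\<bar>f a\<bar>" "\<bar>f b\<bar>"] square_le[OF that(1)] square_le[OF that(2)]
    by (simp add: abs_mult)
  have "\<bar>inner_on X f (matrix_apply X M f)\<bar> = \<bar>\<Sum>a\<in>X. \<Sum>b\<in>X. M a b * (f a * f b)\<bar>"
    by (simp add: matrix_apply_def sum_distrib_left mult_ac)
  also have "\<dots> \<le> (\<Sum>a\<in>X. \<bar>\<Sum>b\<in>X. M a b * (f a * f b)\<bar>)"
    by (rule sum_abs)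
  also have "\<dots> \<le> (\<Sum>a\<in>X. \<Sum>b\<in>X. \<bar>M a b\<bar> * N)"
  proof (intro sum_mono order_trans[OF sum_abs])
    show "\<bar>M a b * (f a * f b)\<bar> \<le> \<bar>M a b\<bar> * N" if "a \<in> X" "b \<in> X" for a b
      unfolding abs_mult[of "M a b"] using product_le[OF that] by (rule mult_left_mono) simp
  qed
  also have "\<dots> = entrywise_norm X M * N"
    by (simp add: entrywise_norm_def sum_distrib_right)
  finally show ?thesis
    unfolding N_def .
qed

lemma matrix_apply_abs_le:
  assumes fin: "finite X" and a: "a \<in> X" and g: "\<And>b. b \<in> X \<Longrightarrow> \<bar>g b\<bar> \<le> 1"
  shows "\<bar>matrix_apply X M g a\<bar> \<le> entrywise_norm X M"
proof -
  have "\<bar>matrix_apply X M g a\<bar> \<le> (\<Sum>b\<in>X. \<bar>M a b * g b\<bar>)"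
    unfolding matrix_apply_def by (rule sum_abs)
  also have "\<dots> \<le> (\<Sum>b\<in>X. \<bar>M a b\<bar>)"
    using g by (intro sum_mono) (simp add: abs_mult mult_left_le)
  also have "\<dots> \<le> entrywise_norm X M"
    unfolding entrywise_norm_def using fin a by (intro member_le_sum) (auto intro: sum_nonneg)
  finally show ?thesis .
qed

lemma unit_vector_abs_le_one:
  assumes "finite X" "inner_on X g g = 1" "v \<in> X"
  shows "\<bar>g v\<bar> \<le> 1"
proof -
  have "(g v)\<^sup>2 \<le> inner_on X g g"
    unfolding power2_eq_square using assms by (intro member_le_sum) auto
  then show ?thesis
    using assms(2) by (simp flip: abs_square_le_1)
qed

lemma decreasing_listing_upper_set:
  assumes "decreasing_listing X W w" "i < card X"
  obtains S where "S \<subseteq> X" "card S = Suc i" "\<And>x. x \<in> S \<Longrightarrow> w i \<le> W x"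
proof -
  obtain \<sigma> where \<sigma>: "bij_betw \<sigma> {..<card X} X" and w: "\<And>k. k < card X \<Longrightarrow> w k = W (\<sigma> k)"
    and dec: "\<And>k j. k \<le> j \<Longrightarrow> j < card X \<Longrightarrow> w j \<le> w k"
    using assms(1) unfolding decreasing_listing_def by blast
  have "{..i} \<subseteq> {..<card X}"
    using assms(2) by auto
  then have "\<sigma> ` {..i} \<subseteq> X" "card (\<sigma> ` {..i}) = Suc i"
    using \<sigma> by (auto simp: bij_betw_def card_image inj_on_subset)
  moreover have "w i \<le> W x" if "x \<in> \<sigma> ` {..i}" for x
    using that w dec assms(2) by fastforce
  ultimately show thesis
    using that by blast
qed

lemma decreasing_listing_lower_set:
  assumes "decreasing_listing X W w" "i < card X"
  obtains S where "S \<subseteq> X" "card S = card X - i" "\<And>x. x \<in> S \<Longrightarrow> W x \<le> w i"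
proof -
  obtain \<sigma> where \<sigma>: "bij_betw \<sigma> {..<card X} X" and w: "\<And>k. k < card X \<Longrightarrow> w k = W (\<sigma> k)"
    and dec: "\<And>k j. k \<le> j \<Longrightarrow> j < card X \<Longrightarrow> w j \<le> w k"
    using assms(1) unfolding decreasing_listing_def by blast
  have "{i..<card X} \<subseteq> {..<card X}"
    by auto
  then have "\<sigma> ` {i..<card X} \<subseteq> X" "card (\<sigma> ` {i..<card X}) = card X - i"
    using \<sigma> by (auto simp: bij_betw_def card_image inj_on_subset)
  moreover have "W x \<le> w i" if "x \<in> \<sigma> ` {i..<card X}" for x
    using that w dec by fastforce
  ultimately show thesis
    using that by blast
qed

lemma schrodinger_eigenvalue_bound:
  assumes fin: "finite X"
    and wlist: "decreasing_listing X W w"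
    and sorted: "\<And>i j. i \<le> j \<Longrightarrow> j < card X \<Longrightarrow> lam i \<le> lam j"
    and orth: "\<And>i j. i < card X \<Longrightarrow> j < card X \<Longrightarrow>
      inner_on X (psi i) (psi j) = (if i = j then 1 else 0)"
    and eig: "\<And>i v. i < card X \<Longrightarrow> v \<in> X \<Longrightarrow>
      schrodinger_apply X E W Q (psi i) v = lam i * psi i v"
    and Q: "0 \<le> Q"
    and i: "i < card X"
  shows "\<bar>lam i + Q * w i\<bar> \<le> entrywise_norm X (sym_laplacian X E)"
proof -
  define L where "L = entrywise_norm X (sym_laplacian X E)"
  have eig_matrix: "matrix_apply X (schrodinger_matrix X E W Q) (psi j) v = lam j * psi j v"
    if "j < card X" "v \<in> X" for j v
    using eig[OF that] schrodinger_apply_eq_matrix_apply[OF fin that(2)] by simp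
  have form: "inner_on X f (matrix_apply X (schrodinger_matrix X E W Q) f)
      = inner_on X f (matrix_apply X (sym_laplacian X E) f) - Q * (\<Sum>x\<in>X. W x * (f x)\<^sup>2)" for f
  proof -
    have "inner_on X f (matrix_apply X (schrodinger_matrix X E W Q) f)
        = inner_on X f (schrodinger_apply X E W Q f)"
      using schrodinger_apply_eq_matrix_apply[OF fin] by simp
    then show ?thesis
      by (simp add: schrodinger_form)
  qed
  have laplacian: "\<bar>inner_on X f (matrix_apply X (sym_laplacian X E) f)\<bar> \<le> L * inner_on X f f" for f
    unfolding L_def by (rule quadratic_form_abs_le[OF fin])
  obtain S where S: "S \<subseteq> X" "card S = Suc i" "\<And>x. x \<in> S \<Longrightarrow> w i \<le> W x"
    using decreasing_listing_upper_set[OF wlist i] by blast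
  have "lam i \<le> L - Q * w i"
  proof (rule eigenvalue_le_of_form_le[OF fin orth eig_matrix sorted S(1,2)])
    fix f :: "'a \<Rightarrow> real"
    assume f0: "\<And>x. x \<notin> S \<Longrightarrow> f x = 0"
    have "w i * inner_on X f f \<le> (\<Sum>x\<in>X. W x * (f x)\<^sup>2)"
      unfolding sum_distrib_left power2_eq_square
      using S(3) f0 by (intro sum_mono) (metis mult_right_mono mult_zero_right zero_le_square order_refl)
    then have "Q * (w i * inner_on X f f) \<le> Q * (\<Sum>x\<in>X. W x * (f x)\<^sup>2)"
      using Q by (rule mult_left_mono)
    then show "inner_on X f (matrix_apply X (schrodinger_matrix X E W Q) f) \<le> (L - Q * w i) * inner_on X f f"
      using form[of f] abs_le_D1[OF laplacian[of f]] by (simp add: algebra_simps)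
  qed
  moreover obtain S' where S': "S' \<subseteq> X" "card S' = card X - i" "\<And>x. x \<in> S' \<Longrightarrow> W x \<le> w i"
    using decreasing_listing_lower_set[OF wlist i] by blast
  have "- L - Q * w i \<le> lam i"
  proof (rule eigenvalue_ge_of_form_ge[OF fin orth eig_matrix sorted i S'(1,2)])
    fix f :: "'a \<Rightarrow> real"
    assume f0: "\<And>x. x \<notin> S' \<Longrightarrow> f x = 0"
    have "(\<Sum>x\<in>X. W x * (f x)\<^sup>2) \<le> w i * inner_on X f f"
      unfolding sum_distrib_left power2_eq_square
      using S'(3) f0 by (intro sum_mono) (metis mult_right_mono mult_zero_right zero_le_square order_refl)
    then have "Q * (\<Sum>x\<in>X. W x * (f x)\<^sup>2) \<le> Q * (w i * inner_on X f f)"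
      using Q by (rule mult_left_mono)
    then show "(- L - Q * w i) * inner_on X f f \<le> inner_on X f (matrix_apply X (schrodinger_matrix X E W Q) f)"
      using form[of f] abs_le_D2[OF laplacian[of f]] by (simp add: algebra_simps)
  qed
  ultimately show ?thesis
    unfolding L_def by linarith
qed

lemma tendsto_zero_of_spectral_gap:
  fixes a p :: "real \<Rightarrow> real"
  assumes a: "\<forall>\<^sub>F Q in at_top. \<bar>a Q + Q * b\<bar> \<le> L"
    and p: "\<forall>\<^sub>F Q in at_top. \<bar>(a Q + Q * c) * p Q\<bar> \<le> L"
    and "b \<noteq> c"
  shows "(p \<longlongrightarrow> 0) at_top"
proof -
  define d where "d = \<bar>c - b\<bar>"
  have d: "0 < d"
    using \<open>b \<noteq> c\<close> by (simp add: d_def)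
  have "\<forall>\<^sub>F Q in at_top. norm (p Q) \<le> 2 * L / d * inverse Q"
    using a p eventually_gt_at_top[of 0] eventually_ge_at_top[of "2 * L / d"]
  proof eventually_elim
    case (elim Q)
    text \<open>The two shifts differ by \<open>Q (c - b)\<close>, which outgrows the bound \<open>L\<close>.\<close>
    have "Q * d = \<bar>(a Q + Q * c) - (a Q + Q * b)\<bar>"
      using elim(3) by (simp add: d_def abs_mult right_diff_distrib[symmetric])
    moreover have "2 * L \<le> Q * d"
      using elim(4) d by (simp add: pos_divide_le_eq)
    ultimately have gap: "Q * d / 2 \<le> \<bar>a Q + Q * c\<bar>"
      using elim(1) by linarith
    have "\<bar>p Q\<bar> * (Q * d / 2) \<le> \<bar>p Q\<bar> * \<bar>a Q + Q * c\<bar>"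
      using gap by (rule mult_left_mono) simp
    also have "\<dots> \<le> L"
      using elim(2) by (simp add: abs_mult mult.commute)
    finally show ?case
      using elim(3) d by (simp add: field_simps)
  qed
  moreover have "((\<lambda>Q. 2 * L / d * inverse Q) \<longlongrightarrow> 0) at_top"
    by (intro tendsto_mult_right_zero tendsto_inverse_0_at_top filterlim_ident)
  ultimately show ?thesis
    by (rule Lim_null_comparison)
qed

theorem lemma1:
  fixes X :: "'a set" and E :: "'a \<Rightarrow> 'a \<Rightarrow> bool" and W :: "'a \<Rightarrow> real"
    and w :: "nat \<Rightarrow> real"
    and lam :: "real \<Rightarrow> nat \<Rightarrow> real"
    and psi :: "real \<Rightarrow> nat \<Rightarrow> 'a \<Rightarrow> real"
  assumes graph: "simple_graph X E"
    and conn: "graph_connected X E"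
    and wlist: "decreasing_listing X W w"
    and sorted: "\<And>Q i j. i \<le> j \<Longrightarrow> j < card X \<Longrightarrow> lam Q i \<le> lam Q j"
    and orthonormal: "\<And>Q i j. i < card X \<Longrightarrow> j < card X \<Longrightarrow>
         (\<Sum>v\<in>X. psi Q i v * psi Q j v) = (if i = j then 1 else 0)"
    and eigen: "\<And>Q i v. i < card X \<Longrightarrow> v \<in> X \<Longrightarrow>
         schrodinger_apply X E W Q (psi Q i) v = lam Q i * psi Q i v"
  shows "\<forall>i < card X. \<forall>v \<in> X. W v \<noteq> w i \<longrightarrow> ((\<lambda>Q. psi Q i v) \<longlongrightarrow> 0) at_top"
proof (intro allI impI ballI)
  fix i v
  assume i: "i < card X" and v: "v \<in> X" and Wv: "W v \<noteq> w i"
  have fin: "finite X"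
    using graph by (simp add: simple_graph_def)
  define L where "L = entrywise_norm X (sym_laplacian X E)"
  have "\<forall>\<^sub>F Q in at_top. \<bar>lam Q i + Q * w i\<bar> \<le> L"
    using eventually_ge_at_top[of 0]
  proof eventually_elim
    case (elim Q)
    show ?case
      unfolding L_def by (rule schrodinger_eigenvalue_bound[OF fin wlist sorted orthonormal eigen elim i])
  qed
  moreover have "\<bar>(lam Q i + Q * W v) * psi Q i v\<bar> \<le> L" for Q
  proof -
    have "(lam Q i + Q * W v) * psi Q i v = matrix_apply X (sym_laplacian X E) (psi Q i) v"
      using eigen[OF i v, of Q] by (simp add: schrodinger_apply_def matrix_apply_def algebra_simps)
    also have "\<bar>\<dots>\<bar> \<le> L"
      unfolding L_def using fin v orthonormal[OF i i, of Q]
      by (intro matrix_apply_abs_le unit_vector_abs_le_one) auto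
    finally show ?thesis .
  qed
  ultimately show "((\<lambda>Q. psi Q i v) \<longlongrightarrow> 0) at_top"
    using Wv by (intro tendsto_zero_of_spectral_gap[where b = "w i" and c = "W v"]) auto
qed

end
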